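(* Let $T$ be an open cone with basepoint $b\in T$, let $x,y\in T$, let $z\in\partial T$, and put $y_\lambda:=(1-\lambda)z+\lambda y$ for $\lambda\in(0,1)$. Then (i) $F_T(x,y_\lambda)-F_{\tau(T,z)}(x,y_\lambda)\to0$ as $\lambda\searrow0$; (ii) $y_\lambda$ converges in the $F_T$-sense to $f_{\tau(T,z),y}|_T$ as $\lambda\searrow0$, i.e. $F_T(\cdot,y_\lambda)-F_T(b,y_\lambda)\to f_{\tau(T,z),y}|_T$ pointwise on $T$; (iii) if moreover $z\notin[0]_T$, then the pointwise closure of $\{h|_T: h\in\mathcal K_{\tau(T,z)}\}$ is contained in $\overline{\mathcal K_T}\cap A_T(z)$.
   Context: $V$ is a finite-dimensional real vector space. An open cone is a nonempty open convex set $T\subset V$ with $\lambda T\subseteq T$ for all $\lambda>0$ and $0\notin T$; $\partial T$ its boundary in $V$. Write $x\le_T y$ iff $y-x\in\overline T$, $[0]_T:=\overline T\cap(-\overline T)$. $M_T(y/x):=\inf\{\lambda>0:y\le_T\lambda x\}$, $F_T(y,x):=\log M_T(y/x)$. Open tangent cone: $\tau(T,z):=\{\lambda(w-z):\lambda>0,\ w\in T\}$ (it is an open cone containing $T$). For an open cone $S\ni b$ and $p\in S$, $f_{S,p}(x):=F_S(x,p)-F_S(b,p)$, $x\in S$; $\mathcal K_S:=\{f_{S,p}:p\in S\}$ and $\overline{\mathcal K_S}$ is its closure in the topology of pointwise convergence on $S$. A sequence $(x_n)$ in $T$ converges in the Funk sense to $g$ if $F_T(\cdot,x_n)-F_T(b,x_n)\to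 g$ pointwise on $T$; a Funk horofunction is such a limit not in $\mathcal K_T$. For $z\in\partial T\setminus[0]_T$, $A_T(z)$ is the set of Funk horofunctions on $T$ that are Funk-sense limits of sequences in $T$ converging to $z$ in the usual topology. *)

theory Defs
  imports "HOL-Analysis.Analysis"
begin

definition open_cone :: "'a::euclidean_space set \<Rightarrow> bool" where
  "open_cone T \<longleftrightarrow> T \<noteq> {} \<and> open T \<and> convex T \<and>
     (\<forall>l>0. \<forall>x\<in>T. l *\<^sub>R x \<in> T) \<and> 0 \<notin> T"

definition cone_le :: "'a::euclidean_space set \<Rightarrow> 'a \<Rightarrow> 'a \<Rightarrow> bool" where
  "cone_le T x y \<longleftrightarrow> y - x \<in> closure T"

definition zero_part :: "'a::euclidean_space set \<Rightarrow> 'a set" where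
  "zero_part T = closure T \<inter> uminus ` closure T"

definition funk_M :: "'a::euclidean_space set \<Rightarrow> 'a \<Rightarrow> 'a \<Rightarrow> real" where
  "funk_M T y x = Inf {l. l > 0 \<and> cone_le T y (l *\<^sub>R x)}"

definition funk_F :: "'a::euclidean_space set \<Rightarrow> 'a \<Rightarrow> 'a \<Rightarrow> real" where
  "funk_F T y x = ln (funk_M T y x)"

definition tangent_cone :: "'a::euclidean_space set \<Rightarrow> 'a \<Rightarrow> 'a set" where
  "tangent_cone T z = {l *\<^sub>R (w - z) | l w. l > 0 \<and> w \<in> T}"

definition funk_f :: "'a::euclidean_space set \<Rightarrow> 'a \<Rightarrow> 'a \<Rightarrow> 'a \<Rightarrow> real" where
  "funk_f S b p x = funk_F S x p - funk_F S b p"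

text \<open>K_S = {f_{S,p} : p \<in> S}; functions are only meaningful on S.\<close>
definition funk_K :: "'a::euclidean_space set \<Rightarrow> 'a \<Rightarrow> ('a \<Rightarrow> real) set" where
  "funk_K S b = {funk_f S b p | p. p \<in> S}"

text \<open>Closure in the topology of pointwise convergence on S (product topology on
  real^S): g is in the closure of A iff every basic neighbourhood (finitely many points
  of S, tolerance e) meets A. Values outside S are irrelevant.\<close>
definition pw_closure :: "'a set \<Rightarrow> ('a \<Rightarrow> real) set \<Rightarrow> ('a \<Rightarrow> real) set" where
  "pw_closure S A = {g. \<forall>P. P \<subseteq> S \<longrightarrow> finite P \<longrightarrow> (\<forall>e>0. \<exists>h\<in>A. \<forall>x\<in>P. \<bar>h x - g x\<bar> < e)}"

definition funk_conv :: "'a::euclidean_space set \<Rightarrow> 'a \<Rightarrow> (nat \<Rightarrow> 'a) \<Rightarrow> ('a \<Rightarrow> real) \<Rightarrow> bool" where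
  "funk_conv T b xs g \<longleftrightarrow>
     (\<forall>w\<in>T. ((\<lambda>n. funk_F T w (xs n) - funk_F T b (xs n)) \<longlongrightarrow> g w) sequentially)"

definition funk_horofunction :: "'a::euclidean_space set \<Rightarrow> 'a \<Rightarrow> ('a \<Rightarrow> real) \<Rightarrow> bool" where
  "funk_horofunction T b g \<longleftrightarrow>
     (\<exists>xs. (\<forall>n. xs n \<in> T) \<and> funk_conv T b xs g) \<and>
     \<not> (\<exists>p\<in>T. \<forall>w\<in>T. g w = funk_f T b p w)"

definition funk_A :: "'a::euclidean_space set \<Rightarrow> 'a \<Rightarrow> 'a \<Rightarrow> ('a \<Rightarrow> real) set" where
  "funk_A T b z = {g. funk_horofunction T b g \<and>
     (\<exists>xs. (\<forall>n. xs n \<in> T) \<and> xs \<longlonglongrightarrow> z \<and> funk_conv T b xs g)}"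

end

theory Submission
  imports Defs
begin

(* Let S = tau(T,z). It is an open cone containing T whose closure contains the whole line
   through z, so M_S is invariant under adding multiples of z to either argument, and
   M_S(x, y_l) = M_S(x, y) / l. Conversely, if M_S(x, y) < c then c (y - z) - x = mu (w - z)
   with w in T, and (c/l) y_l - x = mu w + (c/l - mu) z lies in T for small l. Together with
   M_S <= M_T this gives l M_T(x, y_l) -> M_S(x, y), and (i), (ii) follow by taking logarithms.

   For (iii), each f_{S,p} coincides on T with some f_{S,w}, w in T, which by (ii) is a pointwise
   limit of functions f_{T,q} with q -> z. All these functions h satisfy
   h w - h w' <= F_T(w, w'), and F_T is small near the diagonal, so a diagonal argument over a
   countable dense subset of T yields a sequence in T converging to z both in norm and in the
   Funk sense. The limit g is invariant along z; if g were f_{T,q}, then M_T(b + s z, q) would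
   stay bounded as s -> oo, forcing -z into the closure of T, i.e. z into [0]_T. *)

lemma open_coneD:
  assumes "open_cone T"
  shows "T \<noteq> {}" "open T" "convex T" "0 \<notin> T"
  using assms unfolding open_cone_def by auto

lemma open_cone_scaleR:
  assumes "open_cone T" "l > 0" "x \<in> T"
  shows "l *\<^sub>R x \<in> T"
  using assms unfolding open_cone_def by blast

lemma zero_in_closure_open_cone:
  assumes "open_cone T"
  shows "0 \<in> closure T"
proof -
  obtain w where w: "w \<in> T" using open_coneD(1)[OF assms] by blast
  have "((\<lambda>t. t *\<^sub>R w) \<longlongrightarrow> 0 *\<^sub>R w) (at_right (0::real))"
    by (intro tendsto_intros)
  moreover have "\<forall>\<^sub>F t in at_right 0. t *\<^sub>R w \<in> closure T"
    using eventually_at_right_less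
    by (rule eventually_mono) (use open_cone_scaleR[OF assms _ w] closure_subset in blast)
  ultimately show ?thesis
    by (intro Lim_in_closed_set[OF closed_closure]) auto
qed

lemma open_cone_closure_scaleR:
  assumes "open_cone T" "l \<ge> 0" "x \<in> closure T"
  shows "l *\<^sub>R x \<in> closure T"
proof (cases "l = 0")
  case True
  then show ?thesis using zero_in_closure_open_cone[OF assms(1)] by simp
next
  case False
  then have "l *\<^sub>R x \<in> closure ((*\<^sub>R) l ` T)"
    using assms(3) unfolding closure_scaleR[symmetric] by blast
  also have "\<dots> \<subseteq> closure T"
    using False assms(2) open_cone_scaleR[OF assms(1)] by (intro closure_mono) auto
  finally show ?thesis .
qed

text \<open>The midpoint of an interior point and a closure point of a convex set is interior.\<close>
lemma open_cone_add_closure: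
  assumes "open_cone T" "w \<in> T" "c \<in> closure T"
  shows "w + c \<in> T"
proof -
  have "midpoint w c \<in> T"
  proof (cases "w = c")
    case False
    then have "midpoint w c \<in> open_segment w c" by (simp add: midpoint_in_open_segment)
    also have "\<dots> \<subseteq> T"
      using in_interior_closure_convex_segment[OF open_coneD(3)[OF assms(1)]] assms
        interior_open[OF open_coneD(2)[OF assms(1)]] by simp
    finally show ?thesis .
  qed (use assms(2) in simp)
  then have "2 *\<^sub>R midpoint w c \<in> T" by (rule open_cone_scaleR[OF assms(1), rotated]) simp
  then show ?thesis by (simp add: midpoint_def scaleR_add_right)
qed

lemma open_cone_closure_add:
  assumes "open_cone T" "c \<in> closure T" "d \<in> closure T"
  shows "c + d \<in> closure T"
proof -
  have "d + c \<in> closure ((+) d ` T)"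
    using assms(2) by (simp add: closure_translation)
  also have "\<dots> \<subseteq> closure T"
    using open_cone_add_closure[OF assms(1) _ assms(3)] by (intro closure_mono) (auto simp: add.commute)
  finally show ?thesis by (simp add: add.commute)
qed

lemma funk_M_bdd_below: "bdd_below {l. l > 0 \<and> cone_le S y (l *\<^sub>R x)}"
  by (rule bdd_belowI[of _ 0]) simp

lemma funk_M_le:
  assumes "l > 0" "l *\<^sub>R x - y \<in> closure S"
  shows "funk_M S y x \<le> l"
  unfolding funk_M_def
  by (rule cInf_lower[OF _ funk_M_bdd_below]) (use assms in \<open>simp add: cone_le_def\<close>)

lemma funk_M_set_nonempty:
  assumes "open_cone S" "x \<in> S"
  shows "{l. l > 0 \<and> cone_le S y (l *\<^sub>R x)} \<noteq> {}"
proof -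
  have "((\<lambda>t. x - t *\<^sub>R y) \<longlongrightarrow> x - 0 *\<^sub>R y) (at_right (0::real))"
    by (intro tendsto_intros)
  then have "\<forall>\<^sub>F t in at_right 0. x - t *\<^sub>R y \<in> S"
    using open_coneD(2)[OF assms(1)] assms(2) by (intro topological_tendstoD) auto
  then have "\<forall>\<^sub>F t in at_right 0. 0 < t \<and> x - t *\<^sub>R y \<in> S"
    by (rule eventually_conj[OF eventually_at_right_less])
  then obtain t where t: "t > 0" "x - t *\<^sub>R y \<in> S"
    using eventually_happens'[OF trivial_limit_at_right_real] by blast
  have "inverse t *\<^sub>R (x - t *\<^sub>R y) \<in> S"
    by (rule open_cone_scaleR[OF assms(1) _ t(2)]) (use t in simp)
  moreover have "inverse t *\<^sub>R (x - t *\<^sub>R y) = inverse t *\<^sub>R x - y"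
    using t(1) by (simp add: scaleR_diff_right)
  ultimately have "inverse t *\<^sub>R x - y \<in> S" by simp
  then have "inverse t \<in> {l. l > 0 \<and> cone_le S y (l *\<^sub>R x)}"
    using t(1) closure_subset by (auto simp: cone_le_def)
  then show ?thesis by blast
qed

lemma funk_M_ge:
  assumes "open_cone S" "x \<in> S" "\<And>l. l > 0 \<Longrightarrow> l *\<^sub>R x - y \<in> closure S \<Longrightarrow> a \<le> l"
  shows "a \<le> funk_M S y x"
  unfolding funk_M_def
  by (rule cInf_greatest) (use assms funk_M_set_nonempty[OF assms(1,2)] in \<open>auto simp: cone_le_def\<close>)

lemma funk_M_nonneg:
  assumes "open_cone S" "x \<in> S"
  shows "0 \<le> funk_M S y x"
  by (rule funk_M_ge[OF assms]) simp

lemma funk_M_less_imp_mem: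
  assumes "open_cone S" "x \<in> S" "funk_M S y x < l"
  shows "l *\<^sub>R x - y \<in> S"
proof -
  obtain l' where l': "l' > 0" "l' *\<^sub>R x - y \<in> closure S" "l' < l"
    using assms(3) cInf_less_iff[OF funk_M_set_nonempty[OF assms(1,2)] funk_M_bdd_below]
    unfolding funk_M_def cone_le_def by auto
  have "(l - l') *\<^sub>R x \<in> S" using open_cone_scaleR[OF assms(1)] l' assms(2) by simp
  from open_cone_add_closure[OF assms(1) this l'(2)] show ?thesis by (simp add: algebra_simps)
qed

text \<open>If the infimum were 0, then \<open>-y\<close> would lie in the closure of \<open>S\<close>, and \<open>y + (-y) = 0\<close> in \<open>S\<close>.\<close>
lemma funk_M_pos:
  assumes "open_cone S" "x \<in> S" "y \<in> S"
  shows "0 < funk_M S y x"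
proof (rule ccontr)
  assume "\<not> 0 < funk_M S y x"
  then have "l *\<^sub>R x - y \<in> S" if "l > 0" for l
    using that by (intro funk_M_less_imp_mem[OF assms(1,2)]) simp
  then have "\<forall>\<^sub>F l in at_right 0. l *\<^sub>R x - y \<in> closure S"
    by (intro eventually_mono[OF eventually_at_right_less] closure_subset[THEN subsetD])
  moreover have "((\<lambda>l. l *\<^sub>R x - y) \<longlongrightarrow> 0 *\<^sub>R x - y) (at_right (0::real))"
    by (intro tendsto_intros)
  ultimately have "- y \<in> closure S"
    by (intro Lim_in_closed_set[OF closed_closure]) auto
  from open_cone_add_closure[OF assms(1,3) this] open_coneD(4)[OF assms(1)] show False by simp
qed

lemma funk_M_scaleR:
  assumes "open_cone S" "x \<in> S" "c > 0"
  shows "funk_M S y (c *\<^sub>R x) = funk_M S y x / c"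
proof (rule antisym)
  have "c * funk_M S y (c *\<^sub>R x) \<le> funk_M S y x"
  proof (rule dense_ge)
    fix l assume l: "funk_M S y x < l"
    then have "l > 0" using funk_M_nonneg[OF assms(1,2), of y] by simp
    moreover have "(l / c) *\<^sub>R (c *\<^sub>R x) - y \<in> closure S"
      using funk_M_less_imp_mem[OF assms(1,2) l] closure_subset assms(3) by auto
    ultimately have "funk_M S y (c *\<^sub>R x) \<le> l / c" using assms(3) by (intro funk_M_le) auto
    then show "c * funk_M S y (c *\<^sub>R x) \<le> l" using assms(3) by (simp add: field_simps)
  qed
  then show "funk_M S y (c *\<^sub>R x) \<le> funk_M S y x / c" using assms(3) by (simp add: field_simps)
  have "funk_M S y x / c \<le> funk_M S y (c *\<^sub>R x)"
  proof (rule funk_M_ge[OF assms(1) open_cone_scaleR[OF assms(1,3,2)]])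
    fix l assume "l > 0" "l *\<^sub>R c *\<^sub>R x - y \<in> closure S"
    then have "funk_M S y x \<le> l * c" using assms(3) by (intro funk_M_le) auto
    then show "funk_M S y x / c \<le> l" using assms(3) by (simp add: field_simps)
  qed
  then show "funk_M S y x / c \<le> funk_M S y (c *\<^sub>R x)" .
qed

lemma funk_M_antimono:
  assumes "open_cone T" "x \<in> T" "closure T \<subseteq> closure S"
  shows "funk_M S y x \<le> funk_M T y x"
proof (rule funk_M_ge[OF assms(1,2)])
  fix l assume "l > 0" "l *\<^sub>R x - y \<in> closure T"
  then show "funk_M S y x \<le> l" using assms(3) by (intro funk_M_le) auto
qed

text \<open>For \<open>A' > M\<^sub>T(a/b)\<close> and \<open>B' > M\<^sub>S(b/c)\<close>: \<open>A'B' c - a = A' (B' c - b) + (A' b - a) \<in> S\<close>.\<close>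
lemma funk_M_submult:
  assumes T: "open_cone T" and S: "open_cone S" and "T \<subseteq> S"
    and a: "a \<in> T" and b: "b \<in> T" and c: "c \<in> S"
  shows "funk_M S a c \<le> funk_M T a b * funk_M S b c"
proof -
  let ?A = "funk_M T a b" and ?B = "funk_M S b c"
  have A: "?A > 0" by (rule funk_M_pos[OF T b a])
  have B: "?B \<ge> 0" by (rule funk_M_nonneg[OF S c])
  have le: "funk_M S a c \<le> A' * B'" if "?A < A'" "?B < B'" for A' B'
  proof (rule funk_M_le)
    show "A' * B' > 0" using that A B by simp
    have "A' *\<^sub>R (B' *\<^sub>R c - b) \<in> S"
      using that A funk_M_less_imp_mem[OF S c] open_cone_scaleR[OF S] by simp
    moreover have "A' *\<^sub>R b - a \<in> closure S"
      using funk_M_less_imp_mem[OF T b that(1)] assms(3) closure_subset by blast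
    ultimately have "A' *\<^sub>R (B' *\<^sub>R c - b) + (A' *\<^sub>R b - a) \<in> S"
      by (rule open_cone_add_closure[OF S])
    then show "(A' * B') *\<^sub>R c - a \<in> closure S"
      using closure_subset by (auto simp: algebra_simps)
  qed
  have "funk_M S a c / ?A \<le> B'" if "?B < B'" for B'
  proof -
    have "funk_M S a c / B' \<le> ?A"
    proof (rule dense_ge)
      fix A' assume "?A < A'"
      then show "funk_M S a c / B' \<le> A'"
        using le[OF _ that] that B by (simp add: pos_divide_le_eq mult.commute)
    qed
    then show ?thesis using that A B by (simp add: field_simps)
  qed
  then have "funk_M S a c / ?A \<le> ?B" by (rule dense_ge)
  then show ?thesis using A by (simp add: field_simps)
qed

lemma frontier_open_cone:
  assumes "open_cone T" "z \<in> frontier T"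
  shows "z \<in> closure T" "z \<notin> T"
  using assms interior_open[OF open_coneD(2)[OF assms(1)]] unfolding frontier_def by auto

lemma tangent_cone_memI: "l > 0 \<Longrightarrow> w \<in> T \<Longrightarrow> l *\<^sub>R (w - z) \<in> tangent_cone T z"
  unfolding tangent_cone_def by blast

lemma tangent_cone_memE:
  assumes "v \<in> tangent_cone T z"
  obtains l w where "l > 0" "w \<in> T" "v = l *\<^sub>R (w - z)"
  using assms unfolding tangent_cone_def by blast

lemma convex_positive_multiples:
  assumes "convex C"
  shows "convex {l *\<^sub>R v | l v. l > 0 \<and> v \<in> C}"
proof (rule convexI)
  fix x y :: 'a and u v :: real
  assume "x \<in> {l *\<^sub>R v | l v. l > 0 \<and> v \<in> C}" "y \<in> {l *\<^sub>R v | l v. l > 0 \<and> v \<in> C}"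
    and uv: "0 \<le> u" "0 \<le> v" "u + v = 1"
  then obtain l1 v1 l2 v2 where 1: "l1 > 0" "v1 \<in> C" "x = l1 *\<^sub>R v1"
    and 2: "l2 > 0" "v2 \<in> C" "y = l2 *\<^sub>R v2" by blast
  define L where "L = u * l1 + v * l2"
  have L: "L > 0"
    using uv 1 2 unfolding L_def by (cases "u = 0") (auto intro: add_pos_nonneg)
  have "(u * l1 / L) *\<^sub>R v1 + (v * l2 / L) *\<^sub>R v2 \<in> C"
    using uv 1 2 L by (intro convexD[OF assms]) (auto simp: L_def add_divide_distrib[symmetric])
  moreover have "u *\<^sub>R x + v *\<^sub>R y = L *\<^sub>R ((u * l1 / L) *\<^sub>R v1 + (v * l2 / L) *\<^sub>R v2)"
    using L by (simp add: 1(3) 2(3) scaleR_add_right)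
  ultimately show "u *\<^sub>R x + v *\<^sub>R y \<in> {l *\<^sub>R v | l v. l > 0 \<and> v \<in> C}"
    using L by blast
qed

lemma open_cone_tangent_cone:
  assumes T: "open_cone T" and z: "z \<in> frontier T"
  shows "open_cone (tangent_cone T z)"
proof -
  let ?C = "(\<lambda>w. w - z) ` T"
  have "tangent_cone T z = (\<Union>l\<in>{0<..}. (*\<^sub>R) l ` ?C)"
    unfolding tangent_cone_def by auto
  then have "open (tangent_cone T z)"
    using open_coneD(2)[OF T] by (auto intro!: open_UN open_scaling open_translation_subtract)
  moreover have "tangent_cone T z = {l *\<^sub>R v | l v. l > 0 \<and> v \<in> ?C}"
    unfolding tangent_cone_def by auto
  then have "convex (tangent_cone T z)"
    using open_coneD(3)[OF T] by (auto intro!: convex_positive_multiples convex_translation_subtract)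
  moreover have "tangent_cone T z \<noteq> {}"
    using open_coneD(1)[OF T] tangent_cone_memI[of 1 _ T z] by auto
  moreover have "l *\<^sub>R v \<in> tangent_cone T z" if l: "l > 0" and "v \<in> tangent_cone T z" for l v
  proof -
    obtain m w where "m > 0" "w \<in> T" "v = m *\<^sub>R (w - z)"
      using \<open>v \<in> tangent_cone T z\<close> by (rule tangent_cone_memE)
    then show ?thesis using tangent_cone_memI[of "l * m" w T z] l by simp
  qed
  moreover have "0 \<notin> tangent_cone T z"
    using frontier_open_cone(2)[OF T z] by (auto elim: tangent_cone_memE)
  ultimately show ?thesis unfolding open_cone_def by blast
qed

lemma subset_tangent_cone:
  assumes "open_cone T" "z \<in> closure T"
  shows "T \<subseteq> tangent_cone T z"
proof
  fix w assume "w \<in> T"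
  with assms have "w + z \<in> T" by (intro open_cone_add_closure)
  from tangent_cone_memI[of 1 "w + z" T z, OF _ this] show "w \<in> tangent_cone T z" by simp
qed

text \<open>For \<open>w \<in> T\<close> and \<open>t > 0\<close>, \<open>t w + c z\<close> lies in the tangent cone and tends to \<open>c z\<close>
  as \<open>t \<rightarrow> 0\<close>.\<close>
lemma scaleR_in_closure_tangent_cone:
  assumes T: "open_cone T" and z: "z \<in> closure T"
  shows "c *\<^sub>R z \<in> closure (tangent_cone T z)"
proof -
  obtain w where w: "w \<in> T" using open_coneD(1)[OF T] by blast
  have "t *\<^sub>R w + c *\<^sub>R z \<in> tangent_cone T z" if t: "t > 0" for t
  proof (cases "c < 0")
    case True
    have "(t / - c) *\<^sub>R w \<in> T" using t True by (intro open_cone_scaleR[OF T _ w]) (simp add: divide_pos_neg)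
    from tangent_cone_memI[of "- c" _ T z, OF _ this] show ?thesis using True by (simp add: algebra_simps)
  next
    case False
    have "t *\<^sub>R w + (c + 1) *\<^sub>R z \<in> T"
      using t False by (intro open_cone_add_closure[OF T] open_cone_scaleR[OF T _ w]
          open_cone_closure_scaleR[OF T _ z]) simp_all
    from tangent_cone_memI[of 1 _ T z, OF _ this] show ?thesis by (simp add: algebra_simps)
  qed
  then have "\<forall>\<^sub>F t in at_right 0. t *\<^sub>R w + c *\<^sub>R z \<in> closure (tangent_cone T z)"
    by (intro eventually_mono[OF eventually_at_right_less] closure_subset[THEN subsetD])
  moreover have "((\<lambda>t. t *\<^sub>R w + c *\<^sub>R z) \<longlongrightarrow> 0 *\<^sub>R w + c *\<^sub>R z) (at_right (0::real))"
    by (intro tendsto_intros)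
  ultimately show ?thesis by (intro Lim_in_closed_set[OF closed_closure]) auto
qed

lemma add_scaleR_in_closure_tangent_cone_iff:
  assumes T: "open_cone T" and z: "z \<in> frontier T"
  shows "v + t *\<^sub>R z \<in> closure (tangent_cone T z) \<longleftrightarrow> v \<in> closure (tangent_cone T z)"
proof -
  have shift: "v + t *\<^sub>R z \<in> closure (tangent_cone T z)" if "v \<in> closure (tangent_cone T z)" for v t
    using open_cone_closure_add[OF open_cone_tangent_cone[OF T z] that
        scaleR_in_closure_tangent_cone[OF T frontier_open_cone(1)[OF T z]]] .
  show ?thesis using shift[of "v + t *\<^sub>R z" "- t"] shift[of v t] by auto
qed

lemma funk_M_tangent_cone_add_scaleR:
  assumes "open_cone T" "z \<in> frontier T"
  shows "funk_M (tangent_cone T z) (a + s *\<^sub>R z) (x + t *\<^sub>R z) = funk_M (tangent_cone T z) a x"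
proof -
  have shift: "l *\<^sub>R (x + t *\<^sub>R z) - (a + s *\<^sub>R z) = (l *\<^sub>R x - a) + (l * t - s) *\<^sub>R z" for l
    by (simp add: algebra_simps)
  show ?thesis
    unfolding funk_M_def cone_le_def shift add_scaleR_in_closure_tangent_cone_iff[OF assms] ..
qed

lemma funk_M_tangent_cone_scaleR_add:
  assumes T: "open_cone T" and z: "z \<in> frontier T" and w: "w \<in> tangent_cone T z" and "l > 0"
  shows "funk_M (tangent_cone T z) x (l *\<^sub>R w + t *\<^sub>R z) = funk_M (tangent_cone T z) x w / l"
  using funk_M_tangent_cone_add_scaleR[OF T z, of x 0 "l *\<^sub>R w" t]
    funk_M_scaleR[OF open_cone_tangent_cone[OF T z] w \<open>l > 0\<close>] by simp

lemma segment_point_in_open_cone: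
  assumes T: "open_cone T" and z: "z \<in> closure T" and y: "y \<in> T" and l: "0 < l" "l \<le> 1"
  shows "(1 - l) *\<^sub>R z + l *\<^sub>R y \<in> T"
proof -
  have "l *\<^sub>R y + (1 - l) *\<^sub>R z \<in> T"
    using l by (intro open_cone_add_closure[OF T open_cone_scaleR[OF T l(1) y]]
        open_cone_closure_scaleR[OF T _ z]) simp
  then show ?thesis by (simp add: add.commute)
qed

lemma funk_M_tangent_cone_segment_point:
  assumes T: "open_cone T" and z: "z \<in> frontier T" and y: "y \<in> T" and l: "l > 0"
  shows "funk_M (tangent_cone T z) x ((1 - l) *\<^sub>R z + l *\<^sub>R y) = funk_M (tangent_cone T z) x y / l"
proof -
  have "y \<in> tangent_cone T z"
    using subset_tangent_cone[OF T frontier_open_cone(1)[OF T z]] y by blast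
  from funk_M_tangent_cone_scaleR_add[OF T z this l, of x "1 - l"] show ?thesis
    by (simp add: add.commute)
qed

text \<open>Writing \<open>c (y - z) - x = \<mu> (w - z)\<close> with \<open>w \<in> T\<close>, for \<open>a = c / l \<ge> \<mu>\<close> one gets
  \<open>a ((1 - l) z + l y) - x = \<mu> w + (a - \<mu>) z \<in> T\<close>.\<close>
lemma scaled_funk_M_segment_point_le:
  assumes T: "open_cone T" and z: "z \<in> closure T" and c: "c > 0"
    and "c *\<^sub>R (y - z) - x \<in> tangent_cone T z"
  shows "\<forall>\<^sub>F l in at_right 0. l * funk_M T x ((1 - l) *\<^sub>R z + l *\<^sub>R y) \<le> c"
proof -
  obtain \<mu> w where \<mu>: "\<mu> > 0" and w: "w \<in> T" and eq: "c *\<^sub>R (y - z) - x = \<mu> *\<^sub>R (w - z)"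
    using assms(4) by (rule tangent_cone_memE)
  have "l * funk_M T x ((1 - l) *\<^sub>R z + l *\<^sub>R y) \<le> c" if l: "0 < l" "l < c / \<mu>" for l
  proof -
    define a where "a = c / l"
    have al: "a * l = c" and a: "a > 0" "\<mu> \<le> a"
      using l \<mu> c by (auto simp: a_def field_simps)
    have "a *\<^sub>R ((1 - l) *\<^sub>R z + l *\<^sub>R y) = a *\<^sub>R z + (a * l) *\<^sub>R (y - z)"
      by (simp add: algebra_simps)
    then have "a *\<^sub>R ((1 - l) *\<^sub>R z + l *\<^sub>R y) - x = a *\<^sub>R z + (c *\<^sub>R (y - z) - x)"
      by (simp add: al)
    also have "\<dots> = \<mu> *\<^sub>R w + (a - \<mu>) *\<^sub>R z"
      unfolding eq by (simp add: algebra_simps)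
    also have "\<dots> \<in> T"
      using a by (intro open_cone_add_closure[OF T open_cone_scaleR[OF T \<mu> w]]
          open_cone_closure_scaleR[OF T _ z]) simp
    finally have "funk_M T x ((1 - l) *\<^sub>R z + l *\<^sub>R y) \<le> a"
      using a closure_subset by (intro funk_M_le) auto
    then show ?thesis using l by (simp add: a_def field_simps)
  qed
  then show ?thesis
    unfolding eventually_at_right_field using c \<mu> by (intro exI[of _ "c / \<mu>"]) auto
qed

lemma tendsto_scaled_funk_M_segment_point:
  assumes T: "open_cone T" and z: "z \<in> frontier T" and x: "x \<in> T" and y: "y \<in> T"
  shows "((\<lambda>l. l * funk_M T x ((1 - l) *\<^sub>R z + l *\<^sub>R y)) \<longlongrightarrow> funk_M (tangent_cone T z) x y) (at_right 0)"
proof (rule order_tendstoI)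
  let ?S = "tangent_cone T z"
  have zT: "z \<in> closure T" by (rule frontier_open_cone(1)[OF T z])
  fix a assume a: "a < funk_M ?S x y"
  have "a < l * funk_M T x ((1 - l) *\<^sub>R z + l *\<^sub>R y)" if l: "0 < l" "l \<le> 1" for l
  proof -
    have "funk_M ?S x ((1 - l) *\<^sub>R z + l *\<^sub>R y) \<le> funk_M T x ((1 - l) *\<^sub>R z + l *\<^sub>R y)"
      using subset_tangent_cone[OF T zT]
      by (intro funk_M_antimono[OF T segment_point_in_open_cone[OF T zT y l]] closure_mono)
    then have "funk_M ?S x y / l \<le> funk_M T x ((1 - l) *\<^sub>R z + l *\<^sub>R y)"
      by (simp only: funk_M_tangent_cone_segment_point[OF T z y l(1)])
    then have "funk_M ?S x y \<le> l * funk_M T x ((1 - l) *\<^sub>R z + l *\<^sub>R y)"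
      using l(1) by (simp add: pos_divide_le_eq mult.commute)
    with a show ?thesis by linarith
  qed
  then show "\<forall>\<^sub>F l in at_right 0. a < l * funk_M T x ((1 - l) *\<^sub>R z + l *\<^sub>R y)"
    unfolding eventually_at_right_field by (intro exI[of _ 1]) auto
next
  let ?S = "tangent_cone T z"
  fix a assume "funk_M ?S x y < a"
  then obtain c where c: "funk_M ?S x y < c" "c < a" using dense by blast
  have S: "open_cone ?S" by (rule open_cone_tangent_cone[OF T z])
  have yS: "y \<in> ?S" using subset_tangent_cone[OF T frontier_open_cone(1)[OF T z]] y by blast
  have yz: "y - z \<in> ?S" using tangent_cone_memI[of 1 y T z] y by simp
  have "funk_M ?S x (y - z) = funk_M ?S x y"
    using funk_M_tangent_cone_scaleR_add[OF T z yS, of 1 x "- 1"] by simp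
  then have "c *\<^sub>R (y - z) - x \<in> ?S"
    using c(1) by (intro funk_M_less_imp_mem[OF S yz]) simp
  moreover have "c > 0" using c(1) funk_M_nonneg[OF S yS, of x] by simp
  ultimately have "\<forall>\<^sub>F l in at_right 0. l * funk_M T x ((1 - l) *\<^sub>R z + l *\<^sub>R y) \<le> c"
    by (intro scaled_funk_M_segment_point_le[OF T frontier_open_cone(1)[OF T z]])
  then show "\<forall>\<^sub>F l in at_right 0. l * funk_M T x ((1 - l) *\<^sub>R z + l *\<^sub>R y) < a"
    using c(2) by (auto elim: eventually_mono)
qed

lemma funk_F_segment_point:
  assumes T: "open_cone T" and z: "z \<in> closure T" and x: "x \<in> T" and y: "y \<in> T"
    and l: "0 < l" "l \<le> 1"
  shows "funk_F T x ((1 - l) *\<^sub>R z + l *\<^sub>R y) = ln (l * funk_M T x ((1 - l) *\<^sub>R z + l *\<^sub>R y)) - ln l"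
  using funk_M_pos[OF T segment_point_in_open_cone[OF T z y l] x] l(1)
  by (simp add: funk_F_def ln_mult)

lemma funk_F_segment_point_diff_tendsto_0:
  assumes T: "open_cone T" and z: "z \<in> frontier T" and x: "x \<in> T" and y: "y \<in> T"
  shows "((\<lambda>l. funk_F T x ((1 - l) *\<^sub>R z + l *\<^sub>R y)
                 - funk_F (tangent_cone T z) x ((1 - l) *\<^sub>R z + l *\<^sub>R y)) \<longlongrightarrow> 0) (at_right 0)"
proof -
  let ?c = "funk_M (tangent_cone T z) x y"
  have zT: "z \<in> closure T" by (rule frontier_open_cone(1)[OF T z])
  have c: "?c > 0"
    using subset_tangent_cone[OF T zT] x y by (intro funk_M_pos[OF open_cone_tangent_cone[OF T z]]) auto
  have "((\<lambda>l. ln (l * funk_M T x ((1 - l) *\<^sub>R z + l *\<^sub>R y)) - ln ?c) \<longlongrightarrow> ln ?c - ln ?c) (at_right 0)"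
    using c by (intro tendsto_intros tendsto_scaled_funk_M_segment_point[OF T z x y]) simp
  moreover have "\<forall>\<^sub>F l in at_right 0.
      ln (l * funk_M T x ((1 - l) *\<^sub>R z + l *\<^sub>R y)) - ln ?c
      = funk_F T x ((1 - l) *\<^sub>R z + l *\<^sub>R y) - funk_F (tangent_cone T z) x ((1 - l) *\<^sub>R z + l *\<^sub>R y)"
    unfolding eventually_at_right_field
    using c by (intro exI[of _ 1]) (auto simp: funk_F_segment_point[OF T zT x y]
        funk_F_def[of "tangent_cone T z"] funk_M_tangent_cone_segment_point[OF T z y] ln_div)
  ultimately show ?thesis by (simp add: Lim_transform_eventually)
qed

lemma funk_F_segment_point_tendsto_funk_f:
  assumes T: "open_cone T" and z: "z \<in> frontier T" and b: "b \<in> T" and y: "y \<in> T" and w: "w \<in> T"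
  shows "((\<lambda>l. funk_F T w ((1 - l) *\<^sub>R z + l *\<^sub>R y) - funk_F T b ((1 - l) *\<^sub>R z + l *\<^sub>R y))
            \<longlongrightarrow> funk_f (tangent_cone T z) b y w) (at_right 0)"
proof -
  let ?S = "tangent_cone T z" and ?y = "\<lambda>l. (1 - l) *\<^sub>R z + l *\<^sub>R y"
  have zT: "z \<in> closure T" by (rule frontier_open_cone(1)[OF T z])
  have pos: "funk_M ?S v y > 0" if "v \<in> T" for v
    using subset_tangent_cone[OF T zT] that y by (intro funk_M_pos[OF open_cone_tangent_cone[OF T z]]) auto
  have "((\<lambda>l. ln (l * funk_M T w (?y l)) - ln (l * funk_M T b (?y l)))
          \<longlongrightarrow> ln (funk_M ?S w y) - ln (funk_M ?S b y)) (at_right 0)"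
    using pos[OF w] pos[OF b]
    by (intro tendsto_intros tendsto_scaled_funk_M_segment_point[OF T z _ y] w b) auto
  moreover have "\<forall>\<^sub>F l in at_right 0. ln (l * funk_M T w (?y l)) - ln (l * funk_M T b (?y l))
      = funk_F T w (?y l) - funk_F T b (?y l)"
    unfolding eventually_at_right_field
    by (intro exI[of _ 1]) (auto simp: funk_F_segment_point[OF T zT _ y] w b)
  ultimately show ?thesis
    unfolding funk_f_def funk_F_def[of ?S] by (rule Lim_transform_eventually)
qed

lemma pw_closure_superset: "A \<subseteq> pw_closure S A"
  unfolding pw_closure_def by force

lemma pw_closure_subset_pw_closure:
  assumes "A \<subseteq> pw_closure S B"
  shows "pw_closure S A \<subseteq> pw_closure S B"
proof
  fix g assume g: "g \<in> pw_closure S A"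
  show "g \<in> pw_closure S B" unfolding pw_closure_def
  proof (intro CollectI allI impI)
    fix P e assume P: "P \<subseteq> S" "finite P" and e: "(e::real) > 0"
    have e2: "e / 2 > 0" using e by simp
    obtain h where h: "h \<in> A" "\<forall>x\<in>P. \<bar>h x - g x\<bar> < e / 2"
      using g P e2 unfolding pw_closure_def by blast
    then have "h \<in> pw_closure S B" using assms by blast
    then obtain k where k: "k \<in> B" "\<forall>x\<in>P. \<bar>k x - h x\<bar> < e / 2"
      using P e2 unfolding pw_closure_def by blast
    have "\<forall>x\<in>P. \<bar>k x - g x\<bar> < e"
    proof
      fix x assume "x \<in> P"
      then have "\<bar>k x - h x\<bar> < e / 2" "\<bar>h x - g x\<bar> < e / 2" using h(2) k(2) by auto
      then show "\<bar>k x - g x\<bar> < e" by linarith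
    qed
    with k(1) show "\<exists>k\<in>B. \<forall>x\<in>P. \<bar>k x - g x\<bar> < e" by blast
  qed
qed

lemma pw_closure_mono: "A \<subseteq> B \<Longrightarrow> pw_closure S A \<subseteq> pw_closure S B"
  using pw_closure_subset_pw_closure pw_closure_superset by blast

lemma pw_closure_tendsto:
  assumes "F \<noteq> bot" "\<forall>\<^sub>F t in F. h t \<in> A" "\<And>x. x \<in> S \<Longrightarrow> ((\<lambda>t. h t x) \<longlongrightarrow> g x) F"
  shows "g \<in> pw_closure S A"
  unfolding pw_closure_def
proof (intro CollectI allI impI)
  fix P e assume P: "P \<subseteq> S" "finite P" and e: "(e::real) > 0"
  have "\<forall>\<^sub>F t in F. \<forall>x\<in>P. \<bar>h t x - g x\<bar> < e"
    using P assms(3) e by (intro eventually_ball_finite) (auto simp: tendsto_iff dist_real_def)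
  with assms(2) have "\<forall>\<^sub>F t in F. h t \<in> A \<and> (\<forall>x\<in>P. \<bar>h t x - g x\<bar> < e)"
    by (rule eventually_conj)
  then show "\<exists>h\<in>A. \<forall>x\<in>P. \<bar>h x - g x\<bar> < e"
    using eventually_happens'[OF assms(1)] by blast
qed

lemma pw_closure_diff_le:
  assumes g: "g \<in> pw_closure S A" and "x \<in> S" "x' \<in> S"
    and le: "\<And>h. h \<in> A \<Longrightarrow> h x - h x' \<le> c"
  shows "g x - g x' \<le> c"
proof (rule field_le_epsilon)
  fix e :: real assume "e > 0"
  then have e2: "e / 2 > 0" by simp
  have P: "{x, x'} \<subseteq> S" "finite {x, x'}" using assms(2,3) by auto
  obtain h where "h \<in> A" "\<forall>v\<in>{x, x'}. \<bar>h v - g v\<bar> < e / 2"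
    using g P e2 unfolding pw_closure_def by blast
  then have "h x - h x' \<le> c" "\<bar>h x - g x\<bar> < e / 2" "\<bar>h x' - g x'\<bar> < e / 2"
    using le by auto
  then show "g x - g x' \<le> c + e" by linarith
qed

lemma funk_f_tangent_cone_representative:
  assumes T: "open_cone T" and z: "z \<in> frontier T" and b: "b \<in> T" and p: "p \<in> tangent_cone T z"
  obtains w where "w \<in> T" "\<And>x. x \<in> T \<Longrightarrow> funk_f (tangent_cone T z) b p x = funk_f (tangent_cone T z) b w x"
proof -
  let ?S = "tangent_cone T z"
  obtain \<mu> w where \<mu>: "\<mu> > 0" and w: "w \<in> T" and p_eq: "p = \<mu> *\<^sub>R (w - z)"
    using p by (rule tangent_cone_memE)
  have sub: "T \<subseteq> ?S" by (rule subset_tangent_cone[OF T frontier_open_cone(1)[OF T z]])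
  have "p = \<mu> *\<^sub>R w + (- \<mu>) *\<^sub>R z" using p_eq by (simp add: algebra_simps)
  then have M: "funk_M ?S x p = funk_M ?S x w / \<mu>" for x
    using funk_M_tangent_cone_scaleR_add[OF T z _ \<mu>, of w x "- \<mu>"] sub w by auto
  have pos: "funk_M ?S x w > 0" if "x \<in> T" for x
    using sub that w by (intro funk_M_pos[OF open_cone_tangent_cone[OF T z]]) auto
  show ?thesis
  proof (rule that[OF w])
    fix x assume "x \<in> T"
    then show "funk_f ?S b p x = funk_f ?S b w x"
      using pos[of x] pos[OF b] \<mu> by (simp add: funk_f_def funk_F_def M ln_div)
  qed
qed

lemma tangent_funk_f_in_pw_closure_near:
  assumes T: "open_cone T" and z: "z \<in> frontier T" and b: "b \<in> T"
    and p: "p \<in> tangent_cone T z" and e: "e > 0"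
  shows "funk_f (tangent_cone T z) b p \<in> pw_closure T {funk_f T b q | q. q \<in> T \<and> dist q z < e}"
proof -
  obtain w where w: "w \<in> T"
    and w_eq: "\<And>x. x \<in> T \<Longrightarrow> funk_f (tangent_cone T z) b p x = funk_f (tangent_cone T z) b w x"
    using funk_f_tangent_cone_representative[OF T z b p] by blast
  let ?q = "\<lambda>l. (1 - l) *\<^sub>R z + l *\<^sub>R w"
  have "(?q \<longlongrightarrow> (1 - 0) *\<^sub>R z + 0 *\<^sub>R w) (at_right (0::real))"
    by (intro tendsto_intros)
  then have "\<forall>\<^sub>F l in at_right 0. dist (?q l) z < e"
    using e by (auto dest: tendstoD)
  moreover have "\<forall>\<^sub>F l in at_right 0. ?q l \<in> T"
    unfolding eventually_at_right_field
    by (intro exI[of _ 1]) (auto intro: segment_point_in_open_cone[OF T frontier_open_cone(1)[OF T z] w])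
  ultimately have "\<forall>\<^sub>F l in at_right 0. funk_f T b (?q l) \<in> {funk_f T b q | q. q \<in> T \<and> dist q z < e}"
    by eventually_elim blast
  moreover have "((\<lambda>l. funk_f T b (?q l) x) \<longlongrightarrow> funk_f (tangent_cone T z) b p x) (at_right 0)"
    if "x \<in> T" for x
    unfolding funk_f_def[of T] w_eq[OF that]
    by (rule funk_F_segment_point_tendsto_funk_f[OF T z b w that])
  ultimately show ?thesis by (intro pw_closure_tendsto) auto
qed

lemma pw_closure_tangent_K_subset_near:
  assumes "open_cone T" "z \<in> frontier T" "b \<in> T" "e > 0"
  shows "pw_closure T (funk_K (tangent_cone T z) b) \<subseteq> pw_closure T {funk_f T b q | q. q \<in> T \<and> dist q z < e}"
  using assms tangent_funk_f_in_pw_closure_near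
  by (intro pw_closure_subset_pw_closure) (auto simp: funk_K_def)

lemma funk_f_diff_le_funk_F:
  assumes T: "open_cone T" and S: "open_cone S" and "T \<subseteq> S"
    and w: "w \<in> T" and w': "w' \<in> T" and p: "p \<in> S"
  shows "funk_f S b p w - funk_f S b p w' \<le> funk_F T w w'"
proof -
  have pos: "funk_M S w p > 0" "funk_M T w w' > 0" "funk_M S w' p > 0"
    using assms by (auto intro: funk_M_pos)
  have "ln (funk_M S w p) \<le> ln (funk_M T w w' * funk_M S w' p)"
    using pos funk_M_submult[OF T S assms(3) w w' p] by simp
  with pos show ?thesis by (simp add: funk_f_def funk_F_def ln_mult)
qed

lemma pw_closure_tangent_K_diff_le:
  assumes T: "open_cone T" and z: "z \<in> frontier T"
    and g: "g \<in> pw_closure T (funk_K (tangent_cone T z) b)" and "w \<in> T" "w' \<in> T"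
  shows "g w - g w' \<le> funk_F T w w'"
  using assms(4,5)
  by (intro pw_closure_diff_le[OF g]) (auto simp: funk_K_def intro!: funk_f_diff_le_funk_F[OF T
        open_cone_tangent_cone[OF T z] subset_tangent_cone[OF T frontier_open_cone(1)[OF T z]]])

lemma pw_closure_tangent_K_add_scaleR:
  assumes T: "open_cone T" and z: "z \<in> frontier T"
    and g: "g \<in> pw_closure T (funk_K (tangent_cone T z) b)" and x: "x \<in> T" and s: "s \<ge> 0"
  shows "g (x + s *\<^sub>R z) = g x"
proof -
  have x': "x + s *\<^sub>R z \<in> T"
    using open_cone_add_closure[OF T x open_cone_closure_scaleR[OF T s frontier_open_cone(1)[OF T z]]] .
  have inv: "h (x + s *\<^sub>R z) = h x" if "h \<in> funk_K (tangent_cone T z) b" for h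
    using that funk_M_tangent_cone_add_scaleR[OF T z, of x s _ 0]
    by (auto simp: funk_K_def funk_f_def funk_F_def)
  have "g (x + s *\<^sub>R z) - g x \<le> 0" by (rule pw_closure_diff_le[OF g x' x]) (simp add: inv)
  moreover have "g x - g (x + s *\<^sub>R z) \<le> 0" by (rule pw_closure_diff_le[OF g x x']) (simp add: inv)
  ultimately show ?thesis by simp
qed

text \<open>Here \<open>(C + 1) q - b - s z \<in> T\<close> for every \<open>s > 0\<close>; divide by \<open>s\<close> and let \<open>s \<rightarrow> \<infinity>\<close>.\<close>
lemma neg_in_closure_if_funk_M_bounded:
  assumes T: "open_cone T" and q: "q \<in> T" and bound: "\<And>s. s > 0 \<Longrightarrow> funk_M T (b + s *\<^sub>R z) q \<le> C"
  shows "- z \<in> closure T"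
proof -
  let ?v = "(C + 1) *\<^sub>R q - b"
  have "inverse s *\<^sub>R ?v - z \<in> T" if s: "s > 0" for s
  proof -
    have "(C + 1) *\<^sub>R q - (b + s *\<^sub>R z) \<in> T"
      using bound[OF s] by (intro funk_M_less_imp_mem[OF T q]) simp
    then have "?v - s *\<^sub>R z \<in> T" by (simp add: algebra_simps)
    then have "inverse s *\<^sub>R (?v - s *\<^sub>R z) \<in> T"
      using s by (intro open_cone_scaleR[OF T]) simp_all
    then show ?thesis using s by (simp add: scaleR_diff_right)
  qed
  then have "\<forall>\<^sub>F s in at_top. inverse s *\<^sub>R ?v - z \<in> closure T"
    by (intro eventually_mono[OF eventually_gt_at_top[of 0]] closure_subset[THEN subsetD])
  moreover have "((\<lambda>s. inverse s *\<^sub>R ?v - z) \<longlongrightarrow> 0 *\<^sub>R ?v - z) at_top"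
    by (intro tendsto_intros tendsto_inverse_0_at_top filterlim_ident)
  ultimately show ?thesis by (intro Lim_in_closed_set[OF closed_closure]) auto
qed

lemma pw_closure_tangent_K_not_funk_f:
  assumes T: "open_cone T" and z: "z \<in> frontier T" and b: "b \<in> T" and nz: "z \<notin> zero_part T"
    and g: "g \<in> pw_closure T (funk_K (tangent_cone T z) b)" and q: "q \<in> T"
  shows "\<not> (\<forall>w\<in>T. g w = funk_f T b q w)"
proof
  assume g_eq: "\<forall>w\<in>T. g w = funk_f T b q w"
  have "funk_M T (b + s *\<^sub>R z) q \<le> funk_M T b q" if "s > 0" for s
  proof -
    have bs: "b + s *\<^sub>R z \<in> T" using that
      by (intro open_cone_add_closure[OF T b open_cone_closure_scaleR[OF T _ frontier_open_cone(1)[OF T z]]]) simp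
    have "funk_f T b q (b + s *\<^sub>R z) = funk_f T b q b"
      using pw_closure_tangent_K_add_scaleR[OF T z g b, of s] that g_eq bs b by simp
    then show ?thesis
      using funk_M_pos[OF T q bs] funk_M_pos[OF T q b] by (simp add: funk_f_def funk_F_def)
  qed
  then have "- z \<in> closure T" by (rule neg_in_closure_if_funk_M_bounded[OF T q])
  then show False
    using nz frontier_open_cone(1)[OF T z] unfolding zero_part_def by (metis IntI image_eqI minus_minus)
qed

lemma dense_sequence_in_open:
  fixes T :: "'a::second_countable_topology set"
  assumes "open T" "T \<noteq> {}"
  obtains d :: "nat \<Rightarrow> 'a" where "range d \<subseteq> T" "T \<subseteq> closure (range d)"
proof -
  obtain D :: "'a set" where D: "countable D" "\<And>U. open U \<Longrightarrow> U \<noteq> {} \<Longrightarrow> \<exists>d\<in>D. d \<in> U"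
    using countable_dense_setE by blast
  have "closure D = UNIV"
  proof (rule ccontr)
    assume "closure D \<noteq> UNIV"
    then show False using D(2)[of "- closure D"] closure_subset by blast
  qed
  then have "T \<subseteq> closure (T \<inter> D)" using open_Int_closure_subset[OF assms(1), of D] by simp
  moreover have "T \<inter> D \<noteq> {}" using D(2)[OF assms] by blast
  ultimately show ?thesis using that[of "from_nat_into (T \<inter> D)"] D(1) by simp
qed

lemma eventually_funk_F_le_near_diagonal:
  assumes T: "open_cone T" and w: "w \<in> T" and "\<epsilon> > 0"
  shows "\<forall>\<^sub>F d in nhds w. d \<in> T \<and> funk_F T w d \<le> \<epsilon> \<and> funk_F T d w \<le> \<epsilon>"
proof -
  define k where "k = exp \<epsilon> - 1"
  have k: "k > 0" and lnk: "ln (1 + k) = \<epsilon>" using \<open>\<epsilon> > 0\<close> by (simp_all add: k_def)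
  have kw: "k *\<^sub>R w \<in> T" by (rule open_cone_scaleR[OF T k w])
  have "((\<lambda>d. (1 + k) *\<^sub>R d - w) \<longlongrightarrow> (1 + k) *\<^sub>R w - w) (nhds w)"
    "((\<lambda>d. (1 + k) *\<^sub>R w - d) \<longlongrightarrow> (1 + k) *\<^sub>R w - w) (nhds w)"
    by (intro tendsto_intros filterlim_ident)+
  moreover have "(1 + k) *\<^sub>R w - w \<in> T" using kw by (simp add: algebra_simps)
  ultimately have "\<forall>\<^sub>F d in nhds w. (1 + k) *\<^sub>R d - w \<in> T" "\<forall>\<^sub>F d in nhds w. (1 + k) *\<^sub>R w - d \<in> T"
    using open_coneD(2)[OF T] by (auto intro: topological_tendstoD)
  moreover have "\<forall>\<^sub>F d in nhds w. d \<in> T"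
    using open_coneD(2)[OF T] w by (rule eventually_nhds_in_open)
  ultimately show ?thesis
  proof eventually_elim
    case (elim d)
    then have "funk_M T w d \<le> 1 + k" "funk_M T d w \<le> 1 + k"
      using k closure_subset by (auto intro!: funk_M_le)
    with elim show ?case
      using funk_M_pos[OF T elim(3) w] funk_M_pos[OF T w elim(3)] by (auto simp: funk_F_def lnk[symmetric])
  qed
qed

text \<open>Both \<open>f\<^sub>T\<^sub>,\<^sub>x\<^sub>n\<close> and \<open>g\<close> are controlled by \<open>F\<^sub>T\<close>, which is small near the diagonal,
  so convergence on a dense sequence propagates to all of \<open>T\<close>.\<close>
lemma funk_conv_of_dense_convergence:
  assumes T: "open_cone T" and xs: "\<And>n. xs n \<in> T"
    and d: "range d \<subseteq> T" "T \<subseteq> closure (range d)"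
    and conv: "\<And>i. (\<lambda>n. funk_f T b (xs n) (d i)) \<longlonglongrightarrow> g (d i)"
    and g: "\<And>w w'. w \<in> T \<Longrightarrow> w' \<in> T \<Longrightarrow> g w - g w' \<le> funk_F T w w'"
  shows "funk_conv T b xs g"
  unfolding funk_conv_def
proof (intro ballI tendstoI)
  fix w r assume w: "w \<in> T" and "(r::real) > 0"
  then have r: "r / 3 > 0" by simp
  obtain U where U: "open U" "w \<in> U"
    and near: "\<And>v. v \<in> U \<Longrightarrow> v \<in> T \<and> funk_F T w v \<le> r / 3 \<and> funk_F T v w \<le> r / 3"
    using eventually_funk_F_le_near_diagonal[OF T w r] unfolding eventually_nhds by blast
  have "U \<inter> closure (range d) \<noteq> {}" using U(2) w d(2) by blast
  then obtain i where i: "d i \<in> U" using open_Int_closure_eq_empty[OF U(1)] by blast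
  have dT: "d i \<in> T" using d(1) by blast
  have "\<forall>\<^sub>F n in sequentially. dist (funk_f T b (xs n) (d i)) (g (d i)) < r / 3"
    using conv r by (rule tendstoD)
  then show "\<forall>\<^sub>F n in sequentially. dist (funk_F T w (xs n) - funk_F T b (xs n)) (g w) < r"
  proof (rule eventually_mono)
    fix n assume "dist (funk_f T b (xs n) (d i)) (g (d i)) < r / 3"
    then have close: "\<bar>funk_f T b (xs n) (d i) - g (d i)\<bar> < r / 3" by (simp only: dist_real_def)
    have "funk_f T b (xs n) w - funk_f T b (xs n) (d i) \<le> funk_F T w (d i)"
      "funk_f T b (xs n) (d i) - funk_f T b (xs n) w \<le> funk_F T (d i) w"
      using funk_f_diff_le_funk_F[OF T T subset_refl _ _ xs] w dT by auto
    moreover have "g w - g (d i) \<le> funk_F T w (d i)" "g (d i) - g w \<le> funk_F T (d i) w"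
      using g w dT by auto
    ultimately have "\<bar>funk_f T b (xs n) w - g w\<bar> < r"
      using near[OF i] close unfolding abs_less_iff by linarith
    then show "dist (funk_F T w (xs n) - funk_F T b (xs n)) (g w) < r"
      by (simp only: dist_real_def funk_f_def)
  qed
qed

lemma funk_conv_sequence_exists:
  fixes T :: "'a::euclidean_space set"
  assumes T: "open_cone T"
    and near: "\<And>e. e > 0 \<Longrightarrow> g \<in> pw_closure T {funk_f T b q | q. q \<in> T \<and> dist q z < e}"
    and g: "\<And>w w'. w \<in> T \<Longrightarrow> w' \<in> T \<Longrightarrow> g w - g w' \<le> funk_F T w w'"
  shows "\<exists>xs. (\<forall>n. xs n \<in> T) \<and> xs \<longlonglongrightarrow> z \<and> funk_conv T b xs g"
proof -
  obtain d :: "nat \<Rightarrow> 'a" where d: "range d \<subseteq> T" "T \<subseteq> closure (range d)"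
    using dense_sequence_in_open[OF open_coneD(2,1)[OF T]] by blast
  let ?r = "\<lambda>n. inverse (real (Suc n))"
  have "\<forall>n. \<exists>q. q \<in> T \<and> dist q z < ?r n \<and> (\<forall>i\<le>n. \<bar>funk_f T b q (d i) - g (d i)\<bar> < ?r n)"
  proof
    fix n
    have "d ` {..n} \<subseteq> T" "finite (d ` {..n})" "?r n > 0" using d(1) by auto
    then obtain h where "h \<in> {funk_f T b q | q. q \<in> T \<and> dist q z < ?r n}"
      "\<forall>x\<in>d ` {..n}. \<bar>h x - g x\<bar> < ?r n"
      using near[of "?r n"] unfolding pw_closure_def by blast
    then show "\<exists>q. q \<in> T \<and> dist q z < ?r n \<and> (\<forall>i\<le>n. \<bar>funk_f T b q (d i) - g (d i)\<bar> < ?r n)"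
      by auto
  qed
  then obtain xs where "\<forall>n. xs n \<in> T \<and> dist (xs n) z < ?r n \<and>
      (\<forall>i\<le>n. \<bar>funk_f T b (xs n) (d i) - g (d i)\<bar> < ?r n)"
    by (auto dest!: choice)
  then have xs: "\<And>n. xs n \<in> T" "\<And>n. dist (xs n) z < ?r n"
    "\<And>n i. i \<le> n \<Longrightarrow> \<bar>funk_f T b (xs n) (d i) - g (d i)\<bar> < ?r n"
    by auto
  have "(\<lambda>n. dist (xs n) z) \<longlonglongrightarrow> 0"
    by (rule Lim_null_comparison[OF _ LIMSEQ_inverse_real_of_nat])
      (use xs(2) in \<open>auto intro!: always_eventually less_imp_le\<close>)
  then have "xs \<longlonglongrightarrow> z" by (rule tendsto_dist_iff[THEN iffD2])
  moreover have conv: "(\<lambda>n. funk_f T b (xs n) (d i)) \<longlonglongrightarrow> g (d i)" for i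
  proof (rule tendsto_dist_iff[THEN iffD2])
    show "(\<lambda>n. dist (funk_f T b (xs n) (d i)) (g (d i))) \<longlonglongrightarrow> 0"
      by (rule Lim_null_comparison[OF eventually_mono[OF eventually_ge_at_top[of i]]
            LIMSEQ_inverse_real_of_nat]) (use xs(3) in \<open>simp add: dist_real_def less_imp_le\<close>)
  qed
  moreover have "funk_conv T b xs g" by (rule funk_conv_of_dense_convergence[OF T xs(1) d conv g])
  ultimately show ?thesis using xs(1) by blast
qed

lemma pw_closure_tangent_K_subset:
  assumes T: "open_cone T" and z: "z \<in> frontier T" and b: "b \<in> T" and nz: "z \<notin> zero_part T"
  shows "pw_closure T (funk_K (tangent_cone T z) b) \<subseteq> pw_closure T (funk_K T b) \<inter> funk_A T b z"
proof
  fix g assume g: "g \<in> pw_closure T (funk_K (tangent_cone T z) b)"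
  have near: "g \<in> pw_closure T {funk_f T b q | q. q \<in> T \<and> dist q z < e}" if "e > 0" for e
    using pw_closure_tangent_K_subset_near[OF T z b that] g by blast
  have "{funk_f T b q | q. q \<in> T \<and> dist q z < 1} \<subseteq> funk_K T b" by (auto simp: funk_K_def)
  from pw_closure_mono[OF this, of T] have "g \<in> pw_closure T (funk_K T b)" using near[of 1] by auto
  moreover have "\<exists>xs. (\<forall>n. xs n \<in> T) \<and> xs \<longlonglongrightarrow> z \<and> funk_conv T b xs g"
    by (rule funk_conv_sequence_exists[OF T near pw_closure_tangent_K_diff_le[OF T z g]])
  moreover have "\<not> (\<exists>q\<in>T. \<forall>w\<in>T. g w = funk_f T b q w)"
    using pw_closure_tangent_K_not_funk_f[OF T z b nz g] by blast
  ultimately show "g \<in> pw_closure T (funk_K T b) \<inter> funk_A T b z"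
    unfolding funk_A_def funk_horofunction_def by blast
qed

theorem mainTheorem12:
  fixes T :: "'a::euclidean_space set" and b x y z :: 'a
  assumes "open_cone T" and "b \<in> T" and "x \<in> T" and "y \<in> T" and "z \<in> frontier T"
  shows "((\<lambda>l. funk_F T x ((1 - l) *\<^sub>R z + l *\<^sub>R y)
                 - funk_F (tangent_cone T z) x ((1 - l) *\<^sub>R z + l *\<^sub>R y)) \<longlongrightarrow> 0) (at_right 0) \<and>
         (\<forall>w\<in>T. ((\<lambda>l. funk_F T w ((1 - l) *\<^sub>R z + l *\<^sub>R y) - funk_F T b ((1 - l) *\<^sub>R z + l *\<^sub>R y))
                 \<longlongrightarrow> funk_f (tangent_cone T z) b y w) (at_right 0)) \<and>
         (z \<notin> zero_part T \<longrightarrow>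
           pw_closure T (funk_K (tangent_cone T z) b) \<subseteq> pw_closure T (funk_K T b) \<inter> funk_A T b z)"
proof (intro conjI ballI impI)
  show "((\<lambda>l. funk_F T x ((1 - l) *\<^sub>R z + l *\<^sub>R y)
          - funk_F (tangent_cone T z) x ((1 - l) *\<^sub>R z + l *\<^sub>R y)) \<longlongrightarrow> 0) (at_right 0)"
    by (rule funk_F_segment_point_diff_tendsto_0[OF assms(1,5,3,4)])
  show "((\<lambda>l. funk_F T w ((1 - l) *\<^sub>R z + l *\<^sub>R y) - funk_F T b ((1 - l) *\<^sub>R z + l *\<^sub>R y))
          \<longlongrightarrow> funk_f (tangent_cone T z) b y w) (at_right 0)" if "w \<in> T" for w
    by (rule funk_F_segment_point_tendsto_funk_f[OF assms(1,5,2,4) that])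
  show "pw_closure T (funk_K (tangent_cone T z) b) \<subseteq> pw_closure T (funk_K T b) \<inter> funk_A T b z"
    if "z \<notin> zero_part T"
    by (rule pw_closure_tangent_K_subset[OF assms(1,5,2) that])
qed

end
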